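(* Let $D$ be a non-commutative division ring and $R$ a maximal subring of $D$. Then at least one of the following holds: (1) $N(R)=U(R)\cup\{0\}$; (2) $R$ is a division ring and $[D:R]_l=[D:R]_r$ is finite; (3) $R$ is not a division ring and there exists a nonzero non-unit $a\in R$ with $aR=Ra$ (so that, in particular, $R$ is an Ore $G$-domain whose division ring of quotients is $D$).
   Context: All rings are associative unital and subrings share the identity. A maximal subring of a ring $T$ is a proper subring maximal under inclusion among proper subrings of $T$. $N(R)=\{x\in D: xR=Rx\}$, $U(R)$ is the set of units of $R$. $[D:R]_l$, $[D:R]_r$ are the left and right dimensions of $D$ over a subdivision ring $R$. A $G$-domain is a domain in which the intersection of all nonzero prime ideals is nonzero. *)

theory Defs
  imports Main
begin

definition subring :: "'a::ring_1 set \<Rightarrow> bool" where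
  "subring R \<longleftrightarrow> 1 \<in> R \<and> (\<forall>x\<in>R. \<forall>y\<in>R. x + y \<in> R \<and> x - y \<in> R \<and> x * y \<in> R)"

definition maximal_subring :: "'a::ring_1 set \<Rightarrow> bool" where
  "maximal_subring R \<longleftrightarrow> subring R \<and> R \<noteq> UNIV \<and>
     (\<forall>S. subring S \<and> R \<subseteq> S \<and> S \<noteq> UNIV \<longrightarrow> S = R)"

definition units_of_sub :: "'a::ring_1 set \<Rightarrow> 'a set" where
  "units_of_sub R = {x \<in> R. \<exists>y\<in>R. x * y = 1 \<and> y * x = 1}"

definition normalizer_set :: "'a::ring_1 set \<Rightarrow> 'a set" where
  "normalizer_set R = {x. (\<lambda>r. x * r) ` R = (\<lambda>r. r * x) ` R}"

definition sub_division_ring :: "'a::division_ring set \<Rightarrow> bool" where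
  "sub_division_ring R \<longleftrightarrow> subring R \<and> (\<forall>x\<in>R. x \<noteq> 0 \<longrightarrow> inverse x \<in> R)"

definition left_basis :: "'a::ring_1 set \<Rightarrow> 'a set \<Rightarrow> bool" where
  "left_basis R B \<longleftrightarrow>
     (\<forall>F c. finite F \<and> F \<subseteq> B \<and> (\<forall>b\<in>F. c b \<in> R) \<and> (\<Sum>b\<in>F. c b * b) = 0
            \<longrightarrow> (\<forall>b\<in>F. c b = 0)) \<and>
     (\<forall>d. \<exists>F c. finite F \<and> F \<subseteq> B \<and> (\<forall>b\<in>F. c b \<in> R) \<and> d = (\<Sum>b\<in>F. c b * b))"

definition right_basis :: "'a::ring_1 set \<Rightarrow> 'a set \<Rightarrow> bool" where
  "right_basis R B \<longleftrightarrow>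
     (\<forall>F c. finite F \<and> F \<subseteq> B \<and> (\<forall>b\<in>F. c b \<in> R) \<and> (\<Sum>b\<in>F. b * c b) = 0
            \<longrightarrow> (\<forall>b\<in>F. c b = 0)) \<and>
     (\<forall>d. \<exists>F c. finite F \<and> F \<subseteq> B \<and> (\<forall>b\<in>F. c b \<in> R) \<and> d = (\<Sum>b\<in>F. b * c b))"

definition sub_ideal :: "'a::ring_1 set \<Rightarrow> 'a set \<Rightarrow> bool" where
  "sub_ideal R P \<longleftrightarrow> P \<subseteq> R \<and> 0 \<in> P \<and> (\<forall>x\<in>P. \<forall>y\<in>P. x + y \<in> P \<and> - x \<in> P) \<and>
     (\<forall>r\<in>R. \<forall>x\<in>P. r * x \<in> P \<and> x * r \<in> P)"

definition sub_prime_ideal :: "'a::ring_1 set \<Rightarrow> 'a set \<Rightarrow> bool" where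
  "sub_prime_ideal R P \<longleftrightarrow> sub_ideal R P \<and> P \<noteq> R \<and>
     (\<forall>a\<in>R. \<forall>b\<in>R. (\<forall>r\<in>R. a * r * b \<in> P) \<longrightarrow> a \<in> P \<or> b \<in> P)"

definition G_domain :: "'a::ring_1 set \<Rightarrow> bool" where
  "G_domain R \<longleftrightarrow> (\<exists>x\<in>R. x \<noteq> 0 \<and> (\<forall>P. sub_prime_ideal R P \<and> P \<noteq> {0} \<longrightarrow> x \<in> P))"

(* R (a subring of the division ring D, hence a domain) is a left and right Ore
   domain whose division ring of (left and right) quotients is D *)
definition Ore_with_quotient_ring :: "'a::division_ring set \<Rightarrow> bool" where
  "Ore_with_quotient_ring R \<longleftrightarrow>
     (\<forall>d. \<exists>a\<in>R. \<exists>b\<in>R. b \<noteq> 0 \<and> d = a * inverse b) \<and>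
     (\<forall>d. \<exists>a\<in>R. \<exists>b\<in>R. b \<noteq> 0 \<and> d = inverse b * a)"

end

(* Let x \<noteq> 0 normalize R without being a unit of R. For z normalizing R, the left
   R-combinations of powers of z form a subring, so z \<notin> R forces D = R[z] by maximality.
   If x or x^-1 lies in R, call it a: then D = R[a^-1], so every element of D is a left and a
   right fraction whose denominator is a power of a, and every nonzero prime ideal contains such
   a power (clear the denominator of p^-1), hence contains a.
   If neither x nor x^-1 lies in R, then D = R[x] = R[x^-1], and playing the two expansions of 1
   against each other shows that R is simple. So if n is minimal with x^n a left combination of
   lower powers, then 1, x, ..., x^(n-1) satisfy no nontrivial relation (its leading coefficients
   would form a nonzero ideal): they are a left basis of D, also a right basis as x^j R = R x^j,
   and comparing coefficients in r r^-1 = 1 shows that R is a division ring. *)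

theory Submission
  imports Defs
begin

section \<open>Left and right polynomials in an element\<close>

inductive_set lpolys :: "'a::ring_1 set \<Rightarrow> 'a \<Rightarrow> nat \<Rightarrow> 'a set" for A z m where
  zero: "0 \<in> lpolys A z m"
| monom: "d \<in> A \<Longrightarrow> j < m \<Longrightarrow> d * z ^ j \<in> lpolys A z m"
| add: "s \<in> lpolys A z m \<Longrightarrow> t \<in> lpolys A z m \<Longrightarrow> s + t \<in> lpolys A z m"

inductive_set rpolys :: "'a::ring_1 set \<Rightarrow> 'a \<Rightarrow> nat \<Rightarrow> 'a set" for A z m where
  zero: "0 \<in> rpolys A z m"
| monom: "d \<in> A \<Longrightarrow> j < m \<Longrightarrow> z ^ j * d \<in> rpolys A z m"
| add: "s \<in> rpolys A z m \<Longrightarrow> t \<in> rpolys A z m \<Longrightarrow> s + t \<in> rpolys A z m"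

lemma lpolys_0: "s \<in> lpolys A z 0 \<Longrightarrow> s = 0"
  by (induction rule: lpolys.induct) auto

lemma rpolys_0: "s \<in> rpolys A z 0 \<Longrightarrow> s = 0"
  by (induction rule: rpolys.induct) auto

lemma lpolys_mono: "s \<in> lpolys A z m \<Longrightarrow> A \<subseteq> B \<Longrightarrow> m \<le> k \<Longrightarrow> s \<in> lpolys B z k"
  by (induction rule: lpolys.induct) (auto intro: lpolys.intros)

lemma rpolys_mono: "s \<in> rpolys A z m \<Longrightarrow> A \<subseteq> B \<Longrightarrow> m \<le> k \<Longrightarrow> s \<in> rpolys B z k"
  by (induction rule: rpolys.induct) (auto intro: rpolys.intros)

lemma lpolys_uminus: "s \<in> lpolys A z m \<Longrightarrow> (\<And>a. a \<in> A \<Longrightarrow> - a \<in> A) \<Longrightarrow> - s \<in> lpolys A z m"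
proof (induction rule: lpolys.induct)
  case (monom d j)
  then show ?case using lpolys.monom[of "- d" A j m z] by simp
next
  case (add s t)
  then show ?case using lpolys.add[of "- s" A z m "- t"] by (simp add: add.commute)
qed (auto intro: lpolys.intros)

lemma lpolys_mult_left:
  "s \<in> lpolys A z m \<Longrightarrow> (\<And>a. a \<in> A \<Longrightarrow> r * a \<in> B) \<Longrightarrow> r * s \<in> lpolys B z m"
  by (induction rule: lpolys.induct)
    (auto intro: lpolys.intros simp: distrib_left mult.assoc[symmetric])

lemma rpolys_mult_right:
  "s \<in> rpolys A z m \<Longrightarrow> (\<And>a. a \<in> A \<Longrightarrow> a * r \<in> B) \<Longrightarrow> s * r \<in> rpolys B z m"
  by (induction rule: rpolys.induct) (auto intro: rpolys.intros simp: distrib_right mult.assoc)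

lemma lpolys_mult_power: "s \<in> lpolys A z m \<Longrightarrow> s * z ^ k \<in> lpolys A z (m + k)"
proof (induction rule: lpolys.induct)
  case (monom d j)
  then show ?case using lpolys.monom[of d A "j + k" "m + k" z] by (simp add: power_add mult.assoc)
qed (auto intro: lpolys.intros simp: distrib_right)

context
  fixes A :: "'a::ring_1 set"
  assumes zero_mem: "0 \<in> A" and add_mem: "\<And>a b. a \<in> A \<Longrightarrow> b \<in> A \<Longrightarrow> a + b \<in> A"
begin

lemma lpolys_SucE:
  assumes "s \<in> lpolys A z (Suc m)"
  obtains t d where "t \<in> lpolys A z m" "d \<in> A" "s = t + d * z ^ m"
proof -
  from assms have "\<exists>t\<in>lpolys A z m. \<exists>d\<in>A. s = t + d * z ^ m"
  proof (induction rule: lpolys.induct)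
    case zero
    show ?case using lpolys.zero zero_mem by force
  next
    case (monom d j)
    then consider "j < m" | "j = m" by linarith
    then show ?case
    proof cases
      case 1
      then show ?thesis using monom zero_mem lpolys.monom[of d A j m z] by force
    next
      case 2
      then show ?thesis using monom lpolys.zero by force
    qed
  next
    case (add s t)
    then obtain s' d t' e where "s' \<in> lpolys A z m" "d \<in> A" "s = s' + d * z ^ m"
      "t' \<in> lpolys A z m" "e \<in> A" "t = t' + e * z ^ m" by blast
    then show ?case
      by (intro bexI[of _ "s' + t'"] bexI[of _ "d + e"])
        (auto intro: lpolys.add add_mem simp: algebra_simps)
  qed
  then show thesis using that by blast
qed

lemma rpolys_SucE:
  assumes "s \<in> rpolys A z (Suc m)"
  obtains t d where "t \<in> rpolys A z m" "d \<in> A" "s = t + z ^ m * d"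
proof -
  from assms have "\<exists>t\<in>rpolys A z m. \<exists>d\<in>A. s = t + z ^ m * d"
  proof (induction rule: rpolys.induct)
    case zero
    show ?case using rpolys.zero zero_mem by force
  next
    case (monom d j)
    then consider "j < m" | "j = m" by linarith
    then show ?case
    proof cases
      case 1
      then show ?thesis using monom zero_mem rpolys.monom[of d A j m z] by force
    next
      case 2
      then show ?thesis using monom rpolys.zero by force
    qed
  next
    case (add s t)
    then obtain s' d t' e where "s' \<in> rpolys A z m" "d \<in> A" "s = s' + z ^ m * d"
      "t' \<in> rpolys A z m" "e \<in> A" "t = t' + z ^ m * e" by blast
    then show ?case
      by (intro bexI[of _ "s' + t'"] bexI[of _ "d + e"])
        (auto intro: rpolys.add add_mem simp: algebra_simps)
  qed
  then show thesis using that by blast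
qed

lemma lpolys_Suc_shiftE:
  assumes "s \<in> lpolys A z (Suc m)"
  obtains d t where "d \<in> A" "t \<in> lpolys A z m" "s = d + t * z"
proof -
  from assms have "\<exists>d\<in>A. \<exists>t\<in>lpolys A z m. s = d + t * z"
  proof (induction rule: lpolys.induct)
    case zero
    show ?case using lpolys.zero zero_mem by force
  next
    case (monom d j)
    show ?case
    proof (cases j)
      case 0
      then show ?thesis using monom lpolys.zero by force
    next
      case (Suc i)
      then have "d * z ^ j = 0 + (d * z ^ i) * z" by (simp only: power_Suc2 mult.assoc add_0)
      then show ?thesis using monom Suc zero_mem lpolys.monom[of d A i m z] by force
    qed
  next
    case (add s t)
    then obtain d s' e t' where "d \<in> A" "s' \<in> lpolys A z m" "s = d + s' * z"
      "e \<in> A" "t' \<in> lpolys A z m" "t = e + t' * z" by blast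
    then show ?case
      by (intro bexI[of _ "d + e"] bexI[of _ "s' + t'"])
        (auto intro: lpolys.add add_mem simp: algebra_simps)
  qed
  then show thesis using that by blast
qed

lemma rpolys_Suc_shiftE:
  assumes "s \<in> rpolys A z (Suc m)"
  obtains d t where "d \<in> A" "t \<in> rpolys A z m" "s = d + z * t"
proof -
  from assms have "\<exists>d\<in>A. \<exists>t\<in>rpolys A z m. s = d + z * t"
  proof (induction rule: rpolys.induct)
    case zero
    show ?case using rpolys.zero zero_mem by force
  next
    case (monom d j)
    show ?case
    proof (cases j)
      case 0
      then show ?thesis using monom rpolys.zero by force
    next
      case (Suc i)
      then have "z ^ j * d = 0 + z * (z ^ i * d)" by (simp add: mult.assoc)
      then show ?thesis using monom Suc zero_mem rpolys.monom[of d A i m z] by force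
    qed
  next
    case (add s t)
    then obtain d s' e t' where "d \<in> A" "s' \<in> rpolys A z m" "s = d + z * s'"
      "e \<in> A" "t' \<in> rpolys A z m" "t = e + z * t'" by blast
    then show ?case
      by (intro bexI[of _ "d + e"] bexI[of _ "s' + t'"])
        (auto intro: rpolys.add add_mem simp: algebra_simps)
  qed
  then show thesis using that by blast
qed

lemma lpolys_1: "s \<in> lpolys A z 1 \<Longrightarrow> s \<in> A"
  by (metis One_nat_def lpolys_SucE lpolys_0 add_0 mult_1_right power_0)

lemma rpolys_1: "s \<in> rpolys A z 1 \<Longrightarrow> s \<in> A"
  by (metis One_nat_def rpolys_SucE rpolys_0 add_0 mult_1_left power_0)

lemma lpolys_iff_sum: "s \<in> lpolys A z m \<longleftrightarrow> (\<exists>c. (\<forall>j. c j \<in> A) \<and> s = (\<Sum>j<m. c j * z ^ j))"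
proof
  assume "s \<in> lpolys A z m"
  then show "\<exists>c. (\<forall>j. c j \<in> A) \<and> s = (\<Sum>j<m. c j * z ^ j)"
  proof (induction rule: lpolys.induct)
    case zero
    show ?case using zero_mem by (intro exI[of _ "\<lambda>_. 0"]) simp
  next
    case (monom d j)
    have "(\<Sum>k<m. (if k = j then d else 0) * z ^ k) = (\<Sum>k<m. if k = j then d * z ^ j else 0)"
      by (rule sum.cong) auto
    also have "\<dots> = d * z ^ j"
      using monom by simp
    finally have "(\<Sum>k<m. (if k = j then d else 0) * z ^ k) = d * z ^ j" .
    then show ?case using monom zero_mem by (intro exI[of _ "\<lambda>k. if k = j then d else 0"]) auto
  next
    case (add s t)
    then obtain c e where "\<forall>j. c j \<in> A" "s = (\<Sum>j<m. c j * z ^ j)"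
      "\<forall>j. e j \<in> A" "t = (\<Sum>j<m. e j * z ^ j)" by blast
    then show ?case
      by (intro exI[of _ "\<lambda>j. c j + e j"]) (auto intro: add_mem simp: distrib_right sum.distrib)
  qed
next
  assume "\<exists>c. (\<forall>j. c j \<in> A) \<and> s = (\<Sum>j<m. c j * z ^ j)"
  then obtain c where c: "\<forall>j. c j \<in> A" and s: "s = (\<Sum>j<m. c j * z ^ j)" by blast
  have "(\<Sum>j<k. c j * z ^ j) \<in> lpolys A z m" if "k \<le> m" for k
    using that c by (induction k) (auto intro!: lpolys.intros)
  then show "s \<in> lpolys A z m" using s by blast
qed

end

lemma lpolys_mult_inverse_power:
  fixes z :: "'a::division_ring"
  assumes "s \<in> lpolys A z m" "m \<le> Suc K" "z \<noteq> 0"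
  shows "s * inverse z ^ K \<in> lpolys A (inverse z) (Suc K)"
  using assms
proof (induction rule: lpolys.induct)
  case (monom d j)
  then have "z ^ j * inverse z ^ K = inverse z ^ (K - j)"
    by (simp add: power_diff_conv_inverse power_mult_power_inverse_commute)
  then show ?case
    using monom lpolys.monom[of d A "K - j" "Suc K" "inverse z"] by (simp add: mult.assoc)
qed (auto intro: lpolys.intros simp: distrib_right)

lemma rpolys_inverse_power_mult:
  fixes z :: "'a::division_ring"
  assumes "s \<in> rpolys A z m" "m \<le> Suc K" "z \<noteq> 0"
  shows "inverse z ^ K * s \<in> rpolys A (inverse z) (Suc K)"
  using assms
proof (induction rule: rpolys.induct)
  case (monom d j)
  then have "inverse z ^ K * z ^ j = inverse z ^ (K - j)"
    by (simp add: power_diff_conv_inverse)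
  then show ?case
    using monom rpolys.monom[of d A "K - j" "Suc K" "inverse z"] by (simp flip: mult.assoc)
qed (auto intro: rpolys.intros simp: distrib_left)

section \<open>Elements normalizing a subring\<close>

lemma normalizer_set_iff:
  "z \<in> normalizer_set R \<longleftrightarrow> (\<forall>r\<in>R. \<exists>s\<in>R. z * r = s * z) \<and> (\<forall>r\<in>R. \<exists>s\<in>R. r * z = z * s)"
  unfolding normalizer_set_def by (auto simp: image_def)

lemma normalizer_swap_left:
  assumes "z \<in> normalizer_set R" "r \<in> R"
  obtains s where "s \<in> R" "z * r = s * z"
  using assms by (auto simp: normalizer_set_iff)

lemma normalizer_swap_right:
  assumes "z \<in> normalizer_set R" "r \<in> R"
  obtains s where "s \<in> R" "r * z = z * s"
  using assms by (auto simp: normalizer_set_iff)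

lemma zero_in_normalizer: "0 \<in> normalizer_set R"
  by (simp add: normalizer_set_def image_constant_conv)

lemma one_in_normalizer: "1 \<in> normalizer_set R"
  by (simp add: normalizer_set_def)

lemma normalizer_mult:
  assumes a: "a \<in> normalizer_set R" and b: "b \<in> normalizer_set R"
  shows "a * b \<in> normalizer_set R"
  unfolding normalizer_set_iff
proof (intro conjI ballI)
  fix r assume "r \<in> R"
  then obtain s where s: "s \<in> R" "b * r = s * b" by (rule normalizer_swap_left[OF b])
  obtain s' where "s' \<in> R" "a * s = s' * a" by (rule normalizer_swap_left[OF a s(1)])
  then show "\<exists>s\<in>R. a * b * r = s * (a * b)" using s by (metis mult.assoc)
next
  fix r assume "r \<in> R"
  then obtain s where s: "s \<in> R" "r * a = a * s" by (rule normalizer_swap_right[OF a])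
  obtain s' where "s' \<in> R" "s * b = b * s'" by (rule normalizer_swap_right[OF b s(1)])
  then show "\<exists>s\<in>R. r * (a * b) = a * b * s" using s by (metis mult.assoc)
qed

lemma normalizer_power: "z \<in> normalizer_set R \<Longrightarrow> z ^ k \<in> normalizer_set R"
  by (induction k) (auto intro: one_in_normalizer normalizer_mult)

lemma normalizer_inverse:
  fixes z :: "'a::division_ring"
  assumes z: "z \<in> normalizer_set R"
  shows "inverse z \<in> normalizer_set R"
proof (cases "z = 0")
  case True
  then show ?thesis using z by simp
next
  case False
  show ?thesis
    unfolding normalizer_set_iff
  proof (intro conjI ballI)
    fix r assume "r \<in> R"
    then obtain s where "s \<in> R" "r * z = z * s" by (rule normalizer_swap_right[OF z])
    then have "inverse z * r = s * inverse z"
      using False by (metis mult.assoc mult_1_right mult_1_left left_inverse right_inverse)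
    then show "\<exists>s\<in>R. inverse z * r = s * inverse z" using \<open>s \<in> R\<close> by blast
  next
    fix r assume "r \<in> R"
    then obtain s where "s \<in> R" "z * r = s * z" by (rule normalizer_swap_left[OF z])
    then have "r * inverse z = inverse z * s"
      using False by (metis mult.assoc mult_1_right mult_1_left left_inverse right_inverse)
    then show "\<exists>s\<in>R. r * inverse z = inverse z * s" using \<open>s \<in> R\<close> by blast
  qed
qed

lemma lpolys_mult_right_normalizer:
  assumes "s \<in> lpolys A z m" "z \<in> normalizer_set R" "r \<in> R"
    and "\<And>a r. a \<in> A \<Longrightarrow> r \<in> R \<Longrightarrow> a * r \<in> B"
  shows "s * r \<in> lpolys B z m"
  using assms
proof (induction rule: lpolys.induct)
  case (monom d j)
  obtain r' where "r' \<in> R" "z ^ j * r = r' * z ^ j"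
    using normalizer_power[OF monom(3)] monom(4) by (rule normalizer_swap_left)
  then show ?case using monom lpolys.monom[of "d * r'" B j m z] by (simp add: mult.assoc)
qed (auto intro: lpolys.intros simp: distrib_right)

lemma rpolys_mult_left_normalizer:
  assumes "s \<in> rpolys A z m" "z \<in> normalizer_set R" "r \<in> R"
    and "\<And>a r. a \<in> A \<Longrightarrow> r \<in> R \<Longrightarrow> r * a \<in> B"
  shows "r * s \<in> rpolys B z m"
  using assms
proof (induction rule: rpolys.induct)
  case (monom d j)
  obtain r' where "r' \<in> R" "r * z ^ j = z ^ j * r'"
    using normalizer_power[OF monom(3)] monom(4) by (rule normalizer_swap_right)
  then show ?case using monom rpolys.monom[of "r' * d" B j m z] by (simp flip: mult.assoc)
qed (auto intro: rpolys.intros simp: distrib_left)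

lemma lpolys_eq_rpolys:
  assumes "z \<in> normalizer_set R"
  shows "lpolys R z m = rpolys R z m"
proof
  show "lpolys R z m \<subseteq> rpolys R z m"
  proof
    fix s assume "s \<in> lpolys R z m"
    then show "s \<in> rpolys R z m"
    proof (induction rule: lpolys.induct)
      case (monom d j)
      obtain d' where "d' \<in> R" "d * z ^ j = z ^ j * d'"
        using normalizer_power[OF assms] monom(1) by (rule normalizer_swap_right)
      then show ?case using monom rpolys.monom by metis
    qed (auto intro: rpolys.intros)
  qed
  show "rpolys R z m \<subseteq> lpolys R z m"
  proof
    fix s assume "s \<in> rpolys R z m"
    then show "s \<in> lpolys R z m"
    proof (induction rule: rpolys.induct)
      case (monom d j)
      obtain d' where "d' \<in> R" "z ^ j * d = d' * z ^ j"
        using normalizer_power[OF assms] monom(1) by (rule normalizer_swap_left)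
      then show ?case using monom lpolys.monom by metis
    qed (auto intro: lpolys.intros)
  qed
qed

lemma right_basis_if_left_basis:
  fixes B :: "'a::division_ring set"
  assumes left: "left_basis R B" and B: "B \<subseteq> normalizer_set R" "0 \<notin> B"
  shows "right_basis R B"
proof -
  have conj: "b * r * inverse b \<in> R" "inverse b * r * b \<in> R" if b: "b \<in> B" and r: "r \<in> R" for b r
  proof -
    have "b \<noteq> 0" "b \<in> normalizer_set R" using b B by auto
    obtain s where s: "s \<in> R" "b * r = s * b"
      using normalizer_swap_left[OF \<open>b \<in> normalizer_set R\<close> r] by metis
    obtain s' where s': "s' \<in> R" "r * b = b * s'"
      using normalizer_swap_right[OF \<open>b \<in> normalizer_set R\<close> r] by metis
    have "b * r * inverse b = s" using s(2) \<open>b \<noteq> 0\<close> by (simp add: mult.assoc)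
    then show "b * r * inverse b \<in> R" using s(1) by simp
    have "inverse b * r * b = inverse b * b * s'" by (simp add: mult.assoc s'(2))
    then show "inverse b * r * b \<in> R" using s'(1) \<open>b \<noteq> 0\<close> by simp
  qed
  note left_indep = left[unfolded left_basis_def, THEN conjunct1, rule_format]
    and left_span = left[unfolded left_basis_def, THEN conjunct2, rule_format]
  show ?thesis
    unfolding right_basis_def
  proof (intro conjI allI impI ballI)
    fix F c b
    assume F: "finite F \<and> F \<subseteq> B \<and> (\<forall>b\<in>F. c b \<in> R) \<and> (\<Sum>b\<in>F. b * c b) = 0" and "b \<in> F"
    have nonzero: "a \<noteq> 0" if "a \<in> F" for a using that F B by blast
    have "(\<Sum>a\<in>F. (a * c a * inverse a) * a) = (\<Sum>a\<in>F. a * c a)"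
      using nonzero by (intro sum.cong) (simp_all add: mult.assoc)
    then have "b * c b * inverse b = 0"
      using F conj \<open>b \<in> F\<close> by (intro left_indep[of F "\<lambda>a. a * c a * inverse a"]) auto
    then show "c b = 0" using \<open>b \<in> F\<close> nonzero by simp
  next
    fix d
    obtain F c where F: "finite F" "F \<subseteq> B" "\<forall>b\<in>F. c b \<in> R" "d = (\<Sum>b\<in>F. c b * b)"
      using left_span[of d] by blast
    have nonzero: "a \<noteq> 0" if "a \<in> F" for a using that F B by blast
    have "d = (\<Sum>b\<in>F. b * (inverse b * c b * b))"
      unfolding F(4) using nonzero by (intro sum.cong) (simp_all flip: mult.assoc)
    then show "\<exists>F c. finite F \<and> F \<subseteq> B \<and> (\<forall>b\<in>F. c b \<in> R) \<and> d = (\<Sum>b\<in>F. b * c b)"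
      using F conj by (intro exI[of _ F] exI[of _ "\<lambda>b. inverse b * c b * b"]) blast
  qed
qed

section \<open>Subrings of a division ring\<close>

lemma sub_idealD:
  assumes "sub_ideal R I"
  shows "I \<subseteq> R" "0 \<in> I" "\<And>a b. a \<in> I \<Longrightarrow> b \<in> I \<Longrightarrow> a + b \<in> I"
    "\<And>a. a \<in> I \<Longrightarrow> - a \<in> I" "\<And>r a. r \<in> R \<Longrightarrow> a \<in> I \<Longrightarrow> r * a \<in> I"
    "\<And>a r. a \<in> I \<Longrightarrow> r \<in> R \<Longrightarrow> a * r \<in> I"
  using assms unfolding sub_ideal_def by blast+

locale division_ring_subring =
  fixes R :: "'a::division_ring set"
  assumes subring: "subring R"
begin

lemma one_mem: "1 \<in> R"
  using subring by (simp add: subring_def)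

lemma add_mem: "a \<in> R \<Longrightarrow> b \<in> R \<Longrightarrow> a + b \<in> R"
  and diff_mem: "a \<in> R \<Longrightarrow> b \<in> R \<Longrightarrow> a - b \<in> R"
  and mult_mem: "a \<in> R \<Longrightarrow> b \<in> R \<Longrightarrow> a * b \<in> R"
  using subring by (simp_all add: subring_def)

lemma zero_mem: "0 \<in> R"
  using diff_mem[OF one_mem one_mem] by simp

lemma uminus_mem: "a \<in> R \<Longrightarrow> - a \<in> R"
  using diff_mem[OF zero_mem] by simp

lemma power_mem: "a \<in> R \<Longrightarrow> a ^ k \<in> R"
  by (induction k) (simp_all add: one_mem mult_mem)

lemma nonzero_if_notin: "x \<notin> R \<Longrightarrow> x \<noteq> 0"
  using zero_mem by auto

lemma inverse_nonunit_if_notin: "x \<notin> R \<Longrightarrow> inverse x \<notin> units_of_sub R"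
  unfolding units_of_sub_def using inverse_unique by fastforce

lemma units_subset_normalizer: "units_of_sub R \<subseteq> normalizer_set R"
proof
  fix u assume "u \<in> units_of_sub R"
  then obtain v where uv: "u \<in> R" "v \<in> R" "u * v = 1" "v * u = 1"
    unfolding units_of_sub_def by blast
  show "u \<in> normalizer_set R"
    unfolding normalizer_set_iff
  proof (intro conjI ballI)
    fix r assume "r \<in> R"
    have "u * r = (u * r * v) * u" by (simp add: mult.assoc uv(4))
    then show "\<exists>s\<in>R. u * r = s * u" using uv \<open>r \<in> R\<close> by (blast intro: mult_mem)
  next
    fix r assume "r \<in> R"
    have "r * u = u * (v * r * u)" by (simp add: mult.assoc[symmetric] uv(3))
    then show "\<exists>s\<in>R. r * u = u * s" using uv \<open>r \<in> R\<close> by (blast intro: mult_mem)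
  qed
qed

lemma lpolys_subset:
  assumes "a \<in> R"
  shows "lpolys R a m \<subseteq> R"
proof
  fix s assume "s \<in> lpolys R a m"
  then show "s \<in> R"
    by (induction rule: lpolys.induct) (auto intro: zero_mem add_mem mult_mem power_mem assms)
qed

lemma lpolys_mult:
  assumes "t \<in> lpolys R z k" "s \<in> lpolys R z m" "z \<in> normalizer_set R"
  shows "s * t \<in> lpolys R z (m + k)"
  using assms
proof (induction rule: lpolys.induct)
  case (monom d j)
  have "s * d \<in> lpolys R z m"
    using lpolys_mult_right_normalizer[OF monom(3,4,1)] by (blast intro: mult_mem)
  then have "s * d * z ^ j \<in> lpolys R z (m + j)" by (rule lpolys_mult_power)
  then show ?case using monom(2) by (auto simp: mult.assoc intro: lpolys_mono)
qed (auto intro: lpolys.intros simp: distrib_left)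

lemma lead_coeffs_ideal:
  assumes "x \<in> normalizer_set R"
  shows "sub_ideal R {e \<in> R. e * x ^ d \<in> lpolys R x d}"
  unfolding sub_ideal_def
proof (intro conjI ballI)
  fix r e assume r: "r \<in> R" and e: "e \<in> {e \<in> R. e * x ^ d \<in> lpolys R x d}"
  have "r * (e * x ^ d) \<in> lpolys R x d"
    using e lpolys_mult_left[of "e * x ^ d" R x d r R] r by (auto intro: mult_mem)
  then show "r * e \<in> {e \<in> R. e * x ^ d \<in> lpolys R x d}"
    using r e by (auto simp: mult.assoc intro: mult_mem)
  obtain r' where r': "r' \<in> R" "x ^ d * r' = r * x ^ d"
    using normalizer_swap_right[OF normalizer_power[OF assms] r] by metis
  have "e * x ^ d * r' \<in> lpolys R x d"
    by (rule lpolys_mult_right_normalizer[OF _ assms r'(1)]) (use e in \<open>auto intro: mult_mem\<close>)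
  then show "e * r \<in> {e \<in> R. e * x ^ d \<in> lpolys R x d}"
    using r e r' by (auto simp: mult.assoc intro: mult_mem)
qed (auto intro: zero_mem add_mem uminus_mem lpolys.intros lpolys_uminus
          simp: distrib_right simp flip: minus_mult_left)

lemma prime_ideal_normalizer_power:
  assumes P: "sub_prime_ideal R P" and a: "a \<in> R" "a \<in> normalizer_set R" and "a ^ n \<in> P"
  shows "a \<in> P"
proof -
  have ideal: "sub_ideal R P"
    and prime: "\<And>a b. a \<in> R \<Longrightarrow> b \<in> R \<Longrightarrow> (\<forall>r\<in>R. a * r * b \<in> P) \<Longrightarrow> a \<in> P \<or> b \<in> P"
    using P unfolding sub_prime_ideal_def by blast+
  show ?thesis
    using \<open>a ^ n \<in> P\<close>
  proof (induction n)
    case 0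
    then show ?case using sub_idealD(5)[OF ideal a(1), of 1] by simp
  next
    case (Suc n)
    have "a * r * a ^ n \<in> P" if r: "r \<in> R" for r
    proof -
      obtain s where "s \<in> R" "r * a ^ n = a ^ n * s"
        using normalizer_swap_right[OF normalizer_power[OF a(2)] r] by metis
      then have "a * r * a ^ n = a ^ Suc n * s" by (simp add: mult.assoc)
      then show ?thesis using sub_idealD(6)[OF ideal Suc.prems \<open>s \<in> R\<close>] by simp
    qed
    then have "a \<in> P \<or> a ^ n \<in> P" using prime[OF a(1) power_mem[OF a(1)]] by blast
    then show ?case using Suc.IH by blast
  qed
qed

context
  fixes I and x :: 'a
  assumes I: "sub_ideal R I" and x: "x \<in> normalizer_set R" "x \<noteq> 0"
begin

lemma ideal_lpolys_reduce:
  assumes "1 \<in> lpolys I x (Suc A)" "1 \<in> rpolys I (inverse x) (Suc B)" "B \<le> A" "0 < A"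
  shows "1 \<in> lpolys I x A"
proof -
  obtain t a where t: "t \<in> lpolys I x A" and a: "a \<in> I" and one_t: "1 = t + a * x ^ A"
    using lpolys_SucE[OF sub_idealD(2,3)[OF I] assms(1)] by metis
  obtain c w where c: "c \<in> I" and w: "w \<in> rpolys I (inverse x) B" and one_c: "1 = c + inverse x * w"
    using rpolys_Suc_shiftE[OF sub_idealD(2,3)[OF I] assms(2)] by metis
  have c_w: "1 - c = inverse x * w"
    using one_c by (metis add_diff_cancel_left')
  have "1 - c = (t + a * x ^ A) * (1 - c)"
    by (simp flip: one_t)
  also have "\<dots> = t * (1 - c) + a * (x ^ A * (1 - c))"
    by (simp add: distrib_right mult.assoc)
  also have "x ^ A * (1 - c) = (x ^ A * inverse x) * w"
    by (simp add: c_w mult.assoc)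
  also have "x ^ A * inverse x = x ^ (A - 1)"
    using x(2) \<open>0 < A\<close> by (simp add: power_diff_conv_inverse)
  finally have one: "1 = t * (1 - c) + a * (x ^ (A - 1) * w) + c"
    by (rule iffD1[OF diff_eq_eq])
  have "c \<in> lpolys I x A"
    using lpolys.monom[OF c \<open>0 < A\<close>] by simp
  moreover have "t * (1 - c) \<in> lpolys I x A"
    using c sub_idealD(1)[OF I]
    by (intro lpolys_mult_right_normalizer[OF t x(1)]) (auto intro: diff_mem one_mem sub_idealD(6)[OF I])
  moreover have "x ^ (A - 1) * w \<in> lpolys R x A"
  proof -
    have "w \<in> rpolys R (inverse x) B" using rpolys_mono[OF w sub_idealD(1)[OF I]] by simp
    then have "inverse (inverse x) ^ (A - 1) * w \<in> rpolys R (inverse (inverse x)) (Suc (A - 1))"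
      using assms(3) x(2) by (intro rpolys_inverse_power_mult) auto
    then show ?thesis using \<open>0 < A\<close> lpolys_eq_rpolys[OF x(1)] by simp
  qed
  then have "a * (x ^ (A - 1) * w) \<in> lpolys I x A"
    by (rule lpolys_mult_left) (use a sub_idealD(6)[OF I] in blast)
  ultimately have "t * (1 - c) + a * (x ^ (A - 1) * w) + c \<in> lpolys I x A"
    by (intro lpolys.add)
  then show ?thesis by (simp only: one[symmetric])
qed

lemma ideal_rpolys_reduce:
  assumes "1 \<in> lpolys I x (Suc A)" "1 \<in> rpolys I (inverse x) (Suc B)" "A \<le> B" "0 < B"
  shows "1 \<in> rpolys I (inverse x) B"
proof -
  obtain c w where c: "c \<in> I" and w: "w \<in> lpolys I x A" and one_c: "1 = c + w * x"
    using lpolys_Suc_shiftE[OF sub_idealD(2,3)[OF I] assms(1)] by metis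
  obtain u d where u: "u \<in> rpolys I (inverse x) B" and d: "d \<in> I"
    and one_u: "1 = u + inverse x ^ B * d"
    using rpolys_SucE[OF sub_idealD(2,3)[OF I] assms(2)] by metis
  have c_w: "1 - c = w * x"
    using one_c by (metis add_diff_cancel_left')
  have "1 - c = (1 - c) * (u + inverse x ^ B * d)"
    by (simp flip: one_u)
  also have "\<dots> = (1 - c) * u + (1 - c) * inverse x ^ B * d"
    by (simp add: distrib_left mult.assoc)
  also have "(1 - c) * inverse x ^ B = w * (x * inverse x ^ B)"
    by (simp add: c_w mult.assoc)
  also have "x * inverse x ^ B = inverse x ^ (B - 1)"
    using x(2) \<open>0 < B\<close> by (cases B) (simp_all add: mult.assoc[symmetric])
  finally have one: "1 = (1 - c) * u + w * inverse x ^ (B - 1) * d + c"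
    by (rule iffD1[OF diff_eq_eq])
  have "c \<in> rpolys I (inverse x) B"
    using rpolys.monom[OF c \<open>0 < B\<close>] by simp
  moreover have "(1 - c) * u \<in> rpolys I (inverse x) B"
    using c sub_idealD(1)[OF I]
    by (intro rpolys_mult_left_normalizer[OF u normalizer_inverse[OF x(1)]])
      (auto intro: diff_mem one_mem sub_idealD(5)[OF I])
  moreover have "w * inverse x ^ (B - 1) \<in> rpolys R (inverse x) B"
  proof -
    have "w \<in> lpolys R x A" using lpolys_mono[OF w sub_idealD(1)[OF I]] by simp
    then have "w * inverse x ^ (B - 1) \<in> lpolys R (inverse x) (Suc (B - 1))"
      using assms(3) x(2) by (intro lpolys_mult_inverse_power) auto
    then show ?thesis
      using \<open>0 < B\<close> lpolys_eq_rpolys[OF normalizer_inverse[OF x(1)]] by simp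
  qed
  then have "w * inverse x ^ (B - 1) * d \<in> rpolys I (inverse x) B"
    by (rule rpolys_mult_right) (use d sub_idealD(5)[OF I] in blast)
  ultimately have "(1 - c) * u + w * inverse x ^ (B - 1) * d + c \<in> rpolys I (inverse x) B"
    by (intro rpolys.add)
  then show ?thesis by (simp only: one[symmetric])
qed

lemma one_mem_ideal_if_polys:
  assumes "1 \<in> lpolys I x m" "1 \<in> rpolys I (inverse x) n"
  shows "1 \<in> I"
  using assms
proof (induction "m + n" arbitrary: m n rule: less_induct)
  case less
  show ?case
  proof (cases "m \<le> 1 \<or> n \<le> 1")
    case True
    then consider "m = 0" | "m = 1" | "n = 0" | "n = 1" by linarith
    then show ?thesis
    proof cases
      case 1
      then show ?thesis using lpolys_0[of 1 I x] less.prems(1) by simp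
    next
      case 2
      then show ?thesis using lpolys_1[OF sub_idealD(2,3)[OF I]] less.prems(1) by simp
    next
      case 3
      then show ?thesis using rpolys_0[of 1 I "inverse x"] less.prems(2) by simp
    next
      case 4
      then show ?thesis using rpolys_1[OF sub_idealD(2,3)[OF I]] less.prems(2) by simp
    qed
  next
    case False
    define A B where "A = m - 1" and "B = n - 1"
    then have AB: "m = Suc A" "n = Suc B" "0 < A" "0 < B" using False by auto
    show ?thesis
    proof (cases "B \<le> A")
      case True
      then have "1 \<in> lpolys I x A" using ideal_lpolys_reduce less.prems AB by simp
      then show ?thesis using less.hyps[of A n] less.prems AB by simp
    next
      case False
      then have "1 \<in> rpolys I (inverse x) B" using ideal_rpolys_reduce less.prems AB by simp
      then show ?thesis using less.hyps[of m B] less.prems AB by simp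
    qed
  qed
qed

end

lemma sub_division_ring_if_power_basis:
  assumes span: "\<And>d. \<exists>c. (\<forall>j. c j \<in> R) \<and> d = (\<Sum>j<n. c j * x ^ j)"
    and indep: "\<And>c j. \<forall>j. c j \<in> R \<Longrightarrow> (\<Sum>j<n. c j * x ^ j) = 0 \<Longrightarrow> j < n \<Longrightarrow> c j = 0"
    and "0 < n"
  shows "sub_division_ring R"
  unfolding sub_division_ring_def
proof (intro conjI ballI impI subring)
  fix r assume r: "r \<in> R" "r \<noteq> 0"
  obtain e where e: "\<forall>j. e j \<in> R" "inverse r = (\<Sum>j<n. e j * x ^ j)"
    using span by blast
  define c where "c j = r * e j - (if j = 0 then 1 else 0)" for j
  have "(\<Sum>j<n. (if j = 0 then 1 else 0) * x ^ j) = (\<Sum>j<n. if j = 0 then 1 else 0)"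
    by (rule sum.cong) auto
  also have "\<dots> = 1" using \<open>0 < n\<close> by simp
  finally have "(\<Sum>j<n. c j * x ^ j) = r * inverse r - 1"
    by (simp add: c_def e(2) left_diff_distrib sum_subtractf sum_distrib_left mult.assoc
        del: mult_1 mult_1_left)
  then have "c 0 = 0"
    using indep[of c 0] e(1) r \<open>0 < n\<close> by (simp add: c_def diff_mem mult_mem one_mem zero_mem)
  then have "inverse r = e 0"
    by (intro inverse_unique) (simp add: c_def)
  then show "inverse r \<in> R" using e(1) by simp
qed

lemma left_basis_powers:
  assumes span: "\<And>d. \<exists>c. (\<forall>j. c j \<in> R) \<and> d = (\<Sum>j<n. c j * x ^ j)"
    and indep: "\<And>c j. \<forall>j. c j \<in> R \<Longrightarrow> (\<Sum>j<n. c j * x ^ j) = 0 \<Longrightarrow> j < n \<Longrightarrow> c j = 0"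
    and inj: "inj_on (\<lambda>j. x ^ j) {..<n}"
  shows "left_basis R ((\<lambda>j. x ^ j) ` {..<n})" (is "left_basis R ?B")
  unfolding left_basis_def
proof (intro conjI allI impI ballI)
  fix F c b
  assume F: "finite F \<and> F \<subseteq> ?B \<and> (\<forall>b\<in>F. c b \<in> R) \<and> (\<Sum>b\<in>F. c b * b) = 0" and "b \<in> F"
  define c' where "c' j = (if x ^ j \<in> F then c (x ^ j) else 0)" for j
  have "(\<Sum>j<n. c' j * x ^ j) = (\<Sum>j<n. if x ^ j \<in> F then c (x ^ j) * x ^ j else 0)"
    by (rule sum.cong) (simp_all add: c'_def)
  also have "\<dots> = (\<Sum>b\<in>?B. if b \<in> F then c b * b else 0)"
    using sum.reindex[OF inj, of "\<lambda>b. if b \<in> F then c b * b else 0"] by simp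
  also have "\<dots> = (\<Sum>b\<in>F. c b * b)"
    using F by (simp add: sum.If_cases Int_absorb1)
  finally have "(\<Sum>j<n. c' j * x ^ j) = 0" using F by simp
  moreover have "\<forall>j. c' j \<in> R" using F by (simp add: c'_def zero_mem)
  moreover obtain j where "j < n" "b = x ^ j" using \<open>b \<in> F\<close> F by blast
  ultimately show "c b = 0" using indep[of c' j] \<open>b \<in> F\<close> by (simp add: c'_def)
next
  fix d
  obtain e where e: "\<forall>j. e j \<in> R" "d = (\<Sum>j<n. e j * x ^ j)" using span by blast
  define c where "c b = e (inv_into {..<n} (\<lambda>j. x ^ j) b)" for b
  have "(\<Sum>b\<in>?B. c b * b) = d"
    unfolding e(2) c_def sum.reindex[OF inj] using inj by (intro sum.cong) auto
  then show "\<exists>F c. finite F \<and> F \<subseteq> ?B \<and> (\<forall>b\<in>F. c b \<in> R) \<and> d = (\<Sum>b\<in>F. c b * b)"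
    using e(1) by (intro exI[of _ ?B] exI[of _ c]) (auto simp: c_def)
qed

end

section \<open>Maximal subrings\<close>

locale division_ring_maximal_subring =
  fixes R :: "'a::division_ring set"
  assumes maximal: "maximal_subring R"
begin

sublocale division_ring_subring
  using maximal by unfold_locales (simp add: maximal_subring_def)

lemma lpolys_exhaust:
  assumes z: "z \<in> normalizer_set R" "z \<notin> R"
  shows "\<exists>m. d \<in> lpolys R z m"
proof -
  define S where "S = (\<Union>m. lpolys R z m)"
  have R_S: "r \<in> lpolys R z 1" if "r \<in> R" for r
    using lpolys.monom[OF that, of 0 1 z] by simp
  have "subring S"
    unfolding subring_def
  proof (intro conjI ballI)
    show "1 \<in> S" using R_S[OF one_mem] by (auto simp: S_def)
    fix s t assume "s \<in> S" "t \<in> S"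
    then obtain m k where "s \<in> lpolys R z m" "t \<in> lpolys R z k"
      by (auto simp: S_def)
    then have s: "s \<in> lpolys R z (m + k)" and t: "t \<in> lpolys R z (m + k)"
      by (auto elim: lpolys_mono[OF _ order_refl])
    show "s + t \<in> S" using lpolys.add[OF s t] by (auto simp: S_def)
    show "s - t \<in> S"
      using lpolys.add[OF s lpolys_uminus[OF t uminus_mem]] by (auto simp: S_def)
    show "s * t \<in> S" using lpolys_mult[OF t s z(1)] by (auto simp: S_def)
  qed
  moreover have "R \<subseteq> S" using R_S by (auto simp: S_def)
  moreover have "z \<in> S"
    using lpolys.monom[OF one_mem, of 1 2 z] by (auto simp: S_def)
  ultimately have "S = UNIV"
    using maximal z(2) unfolding maximal_subring_def by blast
  then show ?thesis by (auto simp: S_def)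
qed

lemma one_mem_nonzero_ideal:
  assumes x: "x \<in> normalizer_set R" "x \<notin> R" "inverse x \<notin> R"
    and I: "sub_ideal R I" and a: "a \<in> I" "a \<noteq> 0"
  shows "1 \<in> I"
proof -
  obtain m where "inverse a \<in> lpolys R x m" using lpolys_exhaust[OF x(1,2)] by blast
  then have "a * inverse a \<in> lpolys I x m"
    by (rule lpolys_mult_left) (use a sub_idealD(6)[OF I] in blast)
  then have left: "1 \<in> lpolys I x m" using a by simp
  obtain n where "inverse a \<in> lpolys R (inverse x) n"
    using lpolys_exhaust[OF normalizer_inverse[OF x(1)] x(3)] by blast
  then have "inverse a \<in> rpolys R (inverse x) n"
    using lpolys_eq_rpolys[OF normalizer_inverse[OF x(1)]] by simp
  then have "inverse a * a \<in> rpolys I (inverse x) n"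
    by (rule rpolys_mult_right) (use a sub_idealD(5)[OF I] in blast)
  then have right: "1 \<in> rpolys I (inverse x) n" using a by simp
  show ?thesis by (rule one_mem_ideal_if_polys[OF I x(1) nonzero_if_notin[OF x(2)] left right])
qed

context
  fixes a
  assumes a: "a \<in> R" "a \<noteq> 0" "a \<notin> units_of_sub R" "a \<in> normalizer_set R"
begin

lemma inverse_not_mem: "inverse a \<notin> R"
  using a unfolding units_of_sub_def by auto

lemma not_sub_division_ring_if_nonunit: "\<not> sub_division_ring R"
  using inverse_not_mem a(1,2) unfolding sub_division_ring_def by blast

lemma left_fraction: "\<exists>p\<in>R. \<exists>k. d = p * inverse (a ^ k)"
proof -
  obtain m where "d \<in> lpolys R (inverse a) m"
    using lpolys_exhaust[OF normalizer_inverse[OF a(4)] inverse_not_mem] by blast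
  then have "d * inverse (inverse a) ^ m \<in> lpolys R (inverse (inverse a)) (Suc m)"
    using a(2) by (intro lpolys_mult_inverse_power) auto
  then have "d * a ^ m \<in> R" using lpolys_subset[OF a(1)] by auto
  moreover have "d = d * a ^ m * inverse (a ^ m)" using a(2) by (simp add: mult.assoc)
  ultimately show ?thesis by blast
qed

lemma right_fraction: "\<exists>p\<in>R. \<exists>k. d = inverse (a ^ k) * p"
proof -
  obtain m where "d \<in> lpolys R (inverse a) m"
    using lpolys_exhaust[OF normalizer_inverse[OF a(4)] inverse_not_mem] by blast
  then have "d \<in> rpolys R (inverse a) m"
    using lpolys_eq_rpolys[OF normalizer_inverse[OF a(4)]] by simp
  then have "inverse (inverse a) ^ m * d \<in> rpolys R (inverse (inverse a)) (Suc m)"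
    using a(2) by (intro rpolys_inverse_power_mult) auto
  then have "a ^ m * d \<in> R" using lpolys_subset[OF a(1)] lpolys_eq_rpolys[OF a(4)] by auto
  moreover have "d = inverse (a ^ m) * (a ^ m * d)" using a(2) by (simp flip: mult.assoc)
  ultimately show ?thesis by blast
qed

lemma Ore_with_quotient_ring_if_normalizing_nonunit: "Ore_with_quotient_ring R"
  unfolding Ore_with_quotient_ring_def
  using left_fraction right_fraction power_mem[OF a(1)] a(2) by (metis power_not_zero)

lemma G_domain_if_normalizing_nonunit: "G_domain R"
  unfolding G_domain_def
proof (intro bexI conjI allI impI)
  fix P assume "sub_prime_ideal R P \<and> P \<noteq> {0}"
  then have P: "sub_prime_ideal R P" and ideal: "sub_ideal R P" and "P \<noteq> {0}"
    by (auto simp: sub_prime_ideal_def)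
  then obtain p where p: "p \<in> P" "p \<noteq> 0" using sub_idealD(2)[OF ideal] by blast
  obtain q k where q: "q \<in> R" "inverse p = q * inverse (a ^ k)" using left_fraction by blast
  then have "p * q = a ^ k" using p(2) a(2)
    by (metis mult.assoc mult_1_left mult_1_right left_inverse right_inverse power_not_zero)
  then have "a ^ k \<in> P" using sub_idealD(6)[OF ideal p(1) q(1)] by simp
  then show "a \<in> P" by (rule prime_ideal_normalizer_power[OF P a(1,4)])
qed (use a in auto)

lemma normalizing_nonunit_alternative:
  "\<not> sub_division_ring R \<and>
    (\<exists>a\<in>R. a \<noteq> 0 \<and> a \<notin> units_of_sub R \<and> (\<lambda>r. a * r) ` R = (\<lambda>r. r * a) ` R) \<and>
    G_domain R \<and> Ore_with_quotient_ring R"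
  using a not_sub_division_ring_if_nonunit G_domain_if_normalizing_nonunit
    Ore_with_quotient_ring_if_normalizing_nonunit
  unfolding normalizer_set_def by blast

end

context
  fixes x
  assumes x: "x \<in> normalizer_set R" "x \<notin> R" "inverse x \<notin> R"
begin

lemma power_mem_lower_lpolys: "\<exists>k. x ^ k \<in> lpolys R x k"
proof -
  obtain m where "x \<in> lpolys R (inverse x) m"
    using lpolys_exhaust[OF normalizer_inverse[OF x(1)] x(3)] by blast
  then have "x * inverse (inverse x) ^ m \<in> lpolys R (inverse (inverse x)) (Suc m)"
    using nonzero_if_notin[OF x(2)] by (intro lpolys_mult_inverse_power) auto
  then have "x ^ Suc m \<in> lpolys R x (Suc m)" by simp
  then show ?thesis by blast
qed

lemma lpolys_exhaust_bounded:
  assumes n: "x ^ n \<in> lpolys R x n" "0 < n"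
  shows "d \<in> lpolys R x n"
proof -
  have mult_x: "s * x \<in> lpolys R x n" if "s \<in> lpolys R x n" for s
  proof -
    have "s * x ^ 1 \<in> lpolys R x (Suc n)" using lpolys_mult_power[OF that, of 1] by simp
    then obtain t e where "t \<in> lpolys R x n" "e \<in> R" "s * x = t + e * x ^ n"
      using lpolys_SucE[OF zero_mem add_mem] by (metis power_one_right)
    moreover have "e * x ^ n \<in> lpolys R x n"
      by (rule lpolys_mult_left[OF n(1)]) (use \<open>e \<in> R\<close> mult_mem in blast)
    ultimately show ?thesis by (simp add: lpolys.add)
  qed
  have powers: "x ^ j \<in> lpolys R x n" for j
  proof (induction j)
    case 0
    then show ?case using lpolys.monom[OF one_mem n(2), of x] by simp
  next
    case (Suc j)
    then show ?case using mult_x[OF Suc] by (simp only: power_Suc2)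
  qed
  have "s \<in> lpolys R x n" if "s \<in> lpolys R x m" for s m
    using that
  proof (induction rule: lpolys.induct)
    case (monom d j)
    then show ?case using lpolys_mult_left[OF powers] mult_mem by blast
  qed (auto intro: lpolys.intros)
  then show ?thesis using lpolys_exhaust[OF x(1,2)] by blast
qed

context
  fixes n
  assumes minimal: "\<And>d. d < n \<Longrightarrow> x ^ d \<notin> lpolys R x d"
begin

lemma powers_independent:
  assumes "\<forall>j. c j \<in> R" "(\<Sum>j<n. c j * x ^ j) = 0" "j < n"
  shows "c j = 0"
proof -
  have "c j = 0" if "m \<le> n" "\<forall>j. c j \<in> R" "(\<Sum>j<m. c j * x ^ j) = 0" "j < m" for m c j
    using that
  proof (induction m arbitrary: j)
    case (Suc m)
    have "(\<Sum>j<m. c j * x ^ j) \<in> lpolys R x m"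
      using Suc.prems(2) lpolys_iff_sum[OF zero_mem add_mem] by blast
    then have "- (\<Sum>j<m. c j * x ^ j) \<in> lpolys R x m"
      by (rule lpolys_uminus) (rule uminus_mem)
    moreover have "c m * x ^ m = - (\<Sum>j<m. c j * x ^ j)"
      using Suc.prems(3) by (simp add: eq_neg_iff_add_eq_0 add.commute)
    ultimately have lead: "c m \<in> {e \<in> R. e * x ^ m \<in> lpolys R x m}"
      using Suc.prems(2) by simp
    have "c m = 0"
    proof (rule ccontr)
      assume "c m \<noteq> 0"
      then have "1 \<in> {e \<in> R. e * x ^ m \<in> lpolys R x m}"
        by (rule one_mem_nonzero_ideal[OF x lead_coeffs_ideal[OF x(1)] lead])
      moreover have "m < n" using Suc.prems(1) by simp
      ultimately show False using minimal by simp
    qed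
    show ?case
    proof (cases "j = m")
      case False
      have "(\<Sum>j<m. c j * x ^ j) = 0" using Suc.prems(3) \<open>c m = 0\<close> by simp
      moreover have "j < m" "m \<le> n" using False Suc.prems(1,4) by simp_all
      ultimately show ?thesis using Suc.IH Suc.prems(2) by blast
    qed (use \<open>c m = 0\<close> in simp)
  qed simp
  then show ?thesis using assms by blast
qed

lemma inj_on_powers: "inj_on (\<lambda>j. x ^ j) {..<n}"
proof -
  have "x ^ i \<noteq> x ^ j" if "i < j" "j < n" for i j
  proof
    assume "x ^ i = x ^ j"
    moreover have "x ^ i * x ^ (j - i) = x ^ j"
      using \<open>i < j\<close> by (simp flip: power_add)
    ultimately have "x ^ i * x ^ (j - i) = x ^ i * 1" by simp
    then have "x ^ (j - i) = 1" using nonzero_if_notin[OF x(2)] by simp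
    moreover have "1 * x ^ 0 \<in> lpolys R x (j - i)"
      using \<open>i < j\<close> by (intro lpolys.monom one_mem) simp
    moreover have "j - i < n" using that by linarith
    ultimately show False using minimal[of "j - i"] by simp
  qed
  then show ?thesis by (metis inj_onI lessThan_iff linorder_neqE_nat)
qed

end

lemma division_ring_finite_basis:
  "sub_division_ring R \<and> (\<exists>B. finite B \<and> left_basis R B \<and> right_basis R B)"
proof -
  define n where "n = (LEAST k. x ^ k \<in> lpolys R x k)"
  have n: "x ^ n \<in> lpolys R x n"
    unfolding n_def using power_mem_lower_lpolys by (rule LeastI_ex)
  have minimal: "x ^ d \<notin> lpolys R x d" if "d < n" for d
    using not_less_Least[OF that[unfolded n_def]] .
  have "0 < n" using n by (cases n) (auto dest: lpolys_0)
  have span: "\<exists>c. (\<forall>j. c j \<in> R) \<and> d = (\<Sum>j<n. c j * x ^ j)" for d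
    using lpolys_exhaust_bounded[OF n \<open>0 < n\<close>] lpolys_iff_sum[OF zero_mem add_mem] by blast
  note indep = powers_independent[OF minimal]
  define B where "B = (\<lambda>j. x ^ j) ` {..<n}"
  have "left_basis R B"
    unfolding B_def using span indep inj_on_powers[OF minimal] by (rule left_basis_powers)
  moreover have "B \<subseteq> normalizer_set R" "0 \<notin> B"
    using normalizer_power[OF x(1)] nonzero_if_notin[OF x(2)] by (auto simp: B_def)
  ultimately have "right_basis R B" by (rule right_basis_if_left_basis)
  moreover have "sub_division_ring R"
    using span indep \<open>0 < n\<close> by (rule sub_division_ring_if_power_basis)
  ultimately show ?thesis using \<open>left_basis R B\<close> by (auto simp: B_def)
qed

end

end

theorem theorem2p5:
  fixes R :: "'a::division_ring set"
  assumes noncomm: "\<exists>x y :: 'a. x * y \<noteq> y * x"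
    and max: "maximal_subring R"
  shows "normalizer_set R = units_of_sub R \<union> {0}
    \<or> (sub_division_ring R \<and>
        (\<exists>B C. finite B \<and> finite C \<and> left_basis R B \<and> right_basis R C \<and> card B = card C))
    \<or> (\<not> sub_division_ring R \<and>
        (\<exists>a\<in>R. a \<noteq> 0 \<and> a \<notin> units_of_sub R \<and> (\<lambda>r. a * r) ` R = (\<lambda>r. r * a) ` R) \<and>
        G_domain R \<and> Ore_with_quotient_ring R)"
proof -
  interpret division_ring_maximal_subring R using max by unfold_locales
  show ?thesis
  proof (cases "normalizer_set R = units_of_sub R \<union> {0}")
    case False
    then obtain x where x: "x \<in> normalizer_set R" "x \<noteq> 0" "x \<notin> units_of_sub R"
      using units_subset_normalizer zero_in_normalizer by blast
    consider "x \<in> R" | "x \<notin> R" "inverse x \<in> R" | "x \<notin> R" "inverse x \<notin> R" by blast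
    then show ?thesis
    proof cases
      case 1
      then show ?thesis using normalizing_nonunit_alternative x by blast
    next
      case 2
      then show ?thesis
        using normalizing_nonunit_alternative[OF 2(2) _ inverse_nonunit_if_notin[OF 2(1)]]
          normalizer_inverse[OF x(1)] x(2) by simp
    next
      case 3
      then obtain B where "sub_division_ring R" "finite B" "left_basis R B" "right_basis R B"
        using division_ring_finite_basis x(1) by blast
      then show ?thesis by blast
    qed
  qed simp
qed

end
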